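(* Let $(X,d)$ be a metric space with $|X|=n$ and $k\in[n]$. The procedure $\mathtt{recMSD}(X,k)$ runs in time $n^{O(1)}$.
   Context: $\operatorname{diam}(S)=\max_{p,q\in S}d(p,q)$, $\operatorname{Ball}(x,R)=\{z\in X:d(x,z)\le R\}$, and the cost of a collection of clusters is the sum of their diameters. The randomized procedure $\mathtt{recMSD}(S,t)$ (for nonempty $S\subseteq X$, $t\in[k]$) is: set $\mathcal{C}_i\gets\{S\}$ for all $i\in\{1,\dots,t\}$; if $t=1$ or $|S|=1$, return $(\mathcal{C}_1,\dots,\mathcal{C}_t)$. Otherwise let $x,y\in S$ with $d(x,y)=\operatorname{diam}(S)$, choose $R\in[0,\operatorname{diam}(S)]$ uniformly at random, let $S_1=S\cap\operatorname{Ball}(x,R)$ and $S_2=S\setminus\operatorname{Ball}(x,R)$, compute $\mathcal{A}=\mathtt{recMSD}(S_1,t-1)$ and $\mathcal{B}=\mathtt{recMSD}(S_2,t-1)$; then for all $i,j\in\{1,\dots,t-1\}$ with $i+j\le t$, if $\operatorname{cost}(\mathcal{A}_i\cup\mathcal{B}_j)<\operatorname{cost}(\mathcal{C}_{i+j})$ set $\mathcal{C}_{i+j}\gets\mathcal{A}_i\cup\mathcal{B}_j$. Return $(\mathcal{C}_1,\dots,\mathcal{C}_t)$. *)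

theory Defs
  imports Complex_Main
begin

definition metric_on :: "'a set \<Rightarrow> ('a \<Rightarrow> 'a \<Rightarrow> real) \<Rightarrow> bool" where
  "metric_on X d \<longleftrightarrow>
     (\<forall>x\<in>X. \<forall>y\<in>X. d x y \<ge> 0 \<and> (d x y = 0 \<longleftrightarrow> x = y) \<and> d x y = d y x) \<and>
     (\<forall>x\<in>X. \<forall>y\<in>X. \<forall>z\<in>X. d x z \<le> d x y + d y z)"

definition diam :: "('a \<Rightarrow> 'a \<Rightarrow> real) \<Rightarrow> 'a set \<Rightarrow> real" where
  "diam d S = (if S = {} then 0 else Max {d p q | p q. p \<in> S \<and> q \<in> S})"

definition Ball_d :: "'a set \<Rightarrow> ('a \<Rightarrow> 'a \<Rightarrow> real) \<Rightarrow> 'a \<Rightarrow> real \<Rightarrow> 'a set" where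
  "Ball_d X d x R = {z \<in> X. d x z \<le> R}"

definition cost :: "('a \<Rightarrow> 'a \<Rightarrow> real) \<Rightarrow> 'a set set \<Rightarrow> real" where
  "cost d \<C> = (\<Sum>C\<in>\<C>. diam d C)"

text \<open>Unit-cost RAM model: number of elementary steps needed to evaluate cost d \<C>
  (all pairwise distances inside each cluster, plus one step per cluster).\<close>
definition cost_time :: "'a set set \<Rightarrow> nat" where
  "cost_time \<C> = (\<Sum>C\<in>\<C>. (card C)^2 + 1)"

definition combine_step ::
  "('a \<Rightarrow> 'a \<Rightarrow> real) \<Rightarrow> (nat \<Rightarrow> 'a set set) \<Rightarrow> (nat \<Rightarrow> 'a set set)
    \<Rightarrow> (nat \<Rightarrow> 'a set set) \<times> nat \<Rightarrow> nat \<times> nat \<Rightarrow> (nat \<Rightarrow> 'a set set) \<times> nat" where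
  "combine_step d A B st ij =
     (let C = fst st; T = snd st; i = fst ij; j = snd ij; U = A i \<union> B j;
          T' = T + card (A i) + card (B j) + cost_time U + cost_time (C (i+j)) + 1
      in if cost d U < cost d (C (i+j)) then (C((i+j) := U), T') else (C, T'))"

definition combine ::
  "('a \<Rightarrow> 'a \<Rightarrow> real) \<Rightarrow> nat \<Rightarrow> 'a set \<Rightarrow> (nat \<Rightarrow> 'a set set) \<Rightarrow> (nat \<Rightarrow> 'a set set)
    \<Rightarrow> (nat \<Rightarrow> 'a set set) \<times> nat" where
  "combine d t S A B =
     foldl (combine_step d A B) (\<lambda>_. {S}, 0)
       [(i, j). i \<leftarrow> [1..<t], j \<leftarrow> [1..<t], i + j \<le> t]"

text \<open>msd_run X d S t C T: some execution of recMSD(S,t) (over all random radii R and all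
  choices of the diametral pair x,y) returns (C_1,...,C_t) (C i for i in 1..t) and takes
  T elementary steps.  Step counts: t for initialising C_1..C_t, 1 for the base test,
  card S^2 for finding a diametral pair, 1 for drawing R, card S for splitting,
  plus the recursive calls and the combination loop.\<close>
inductive msd_run :: "'a set \<Rightarrow> ('a \<Rightarrow> 'a \<Rightarrow> real) \<Rightarrow> 'a set \<Rightarrow> nat
    \<Rightarrow> (nat \<Rightarrow> 'a set set) \<Rightarrow> nat \<Rightarrow> bool" for X d where
  base: "t = 1 \<or> card S \<le> 1 \<Longrightarrow> msd_run X d S t (\<lambda>_. {S}) (t + 1)"
| step: "\<lbrakk> 2 \<le> t; card S > 1; x \<in> S; y \<in> S; d x y = diam d S;
          0 \<le> R; R \<le> diam d S;
          msd_run X d (S \<inter> Ball_d X d x R) (t - 1) A TA;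
          msd_run X d (S - Ball_d X d x R) (t - 1) B TB;
          combine d t S A B = (C, TL) \<rbrakk>
       \<Longrightarrow> msd_run X d S t C (t + 1 + (card S)^2 + 1 + card S + TA + TB + TL)"

end

theory Submission
  imports Defs "HOL-Library.Disjoint_Sets"
begin

text \<open>Every collection \<open>\<C>\<^sub>i\<close> built during a run on \<open>S\<close> consists of pairwise disjoint
  subsets of \<open>S\<close>, so it has at most \<open>|S| + 1\<close> members and its cost is evaluated in
  \<open>O(|S|\<^sup>2)\<close> steps.  Hence one iteration of the combination loop costs \<open>O(|S|\<^sup>2)\<close> and the
  whole loop \<open>O(t\<^sup>2 |S|\<^sup>2)\<close>.  The recursive calls run on a partition \<open>S = S\<^sub>1 \<union> S\<^sub>2\<close> and
  \<open>|S\<^sub>1|\<^sup>2 + |S\<^sub>2|\<^sup>2 \<le> |S|\<^sup>2\<close>, so induction over the run gives \<open>T \<le> 12 t\<^sup>3 |S|\<^sup>2 + 2t + 1\<close> for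
  every execution, whatever the distance function and the random radii.  Since \<open>k \<le> n\<close>,
  this is polynomial in \<open>n\<close>.\<close>

definition cluster_family :: "'a set \<Rightarrow> 'a set set \<Rightarrow> bool" where
  "cluster_family S \<C> \<longleftrightarrow> finite \<C> \<and> \<Union>\<C> \<subseteq> S \<and> disjoint \<C>"

lemma cluster_family_singleton: "cluster_family S {S}"
  unfolding cluster_family_def by simp

lemma cluster_family_subset: "cluster_family S \<C> \<Longrightarrow> \<D> \<subseteq> \<C> \<Longrightarrow> cluster_family S \<D>"
  unfolding cluster_family_def by (auto intro: finite_subset pairwise_subset)

lemma cluster_family_member_subset: "cluster_family S \<C> \<Longrightarrow> C \<in> \<C> \<Longrightarrow> C \<subseteq> S"
  unfolding cluster_family_def by blast

lemma cluster_family_Un: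
  assumes "cluster_family S\<^sub>1 \<A>" "cluster_family S\<^sub>2 \<B>" "S\<^sub>1 \<inter> S\<^sub>2 = {}"
  shows "cluster_family (S\<^sub>1 \<union> S\<^sub>2) (\<A> \<union> \<B>)"
  using assms unfolding cluster_family_def by (auto intro!: disjoint_union)

lemma finite_cluster_family_member:
  "finite S \<Longrightarrow> cluster_family S \<C> \<Longrightarrow> C \<in> \<C> \<Longrightarrow> finite C"
  using cluster_family_member_subset finite_subset by metis

lemma sum_card_cluster_family_le:
  assumes "finite S" "cluster_family S \<C>"
  shows "sum card \<C> \<le> card S"
proof -
  have "\<Union>\<C> \<subseteq> S" "disjoint \<C>" using assms(2) unfolding cluster_family_def by blast+
  then have "sum card \<C> = card (\<Union>\<C>)"
    using finite_cluster_family_member[OF assms] by (intro card_Union_disjoint[symmetric])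
  also have "\<dots> \<le> card S" using \<open>\<Union>\<C> \<subseteq> S\<close> assms(1) by (rule card_mono[rotated])
  finally show ?thesis .
qed

lemma card_cluster_family_le:
  assumes "finite S" "cluster_family S \<C>"
  shows "card \<C> \<le> card S + 1"
proof -
  have fin: "finite \<C>" "\<And>C. C \<in> \<C> \<Longrightarrow> finite C"
    using assms finite_cluster_family_member unfolding cluster_family_def by blast+
  have "card (\<C> - {{}}) = (\<Sum>C\<in>\<C> - {{}}. 1)" by simp
  also have "\<dots> \<le> (\<Sum>C\<in>\<C> - {{}}. card C)"
    using fin by (intro sum_mono) (auto simp: Suc_le_eq card_gt_0_iff)
  also have "\<dots> \<le> sum card \<C>" using fin by (intro sum_mono2) auto
  also have "\<dots> \<le> card S" using assms by (rule sum_card_cluster_family_le)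
  finally have "card (\<C> - {{}}) \<le> card S" .
  moreover have "card \<C> \<le> card (\<C> - {{}}) + 1"
    using fin card_Diff_singleton_if[of \<C> "{}"] by (cases "{} \<in> \<C>") (auto simp: card_gt_0_iff)
  ultimately show ?thesis by linarith
qed

lemma cost_time_cluster_family_le:
  assumes "finite S" "cluster_family S \<C>"
  shows "cost_time \<C> \<le> card S^2 + card S + 1"
proof -
  have "card C \<le> card S" if "C \<in> \<C>" for C
    using assms that cluster_family_member_subset card_mono by metis
  then have "(\<Sum>C\<in>\<C>. card C^2) \<le> (\<Sum>C\<in>\<C>. card S * card C)"
    by (intro sum_mono) (simp add: power2_eq_square)
  also have "\<dots> \<le> card S^2"
    using sum_card_cluster_family_le[OF assms]
    by (simp add: power2_eq_square flip: sum_distrib_left)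
  finally have "(\<Sum>C\<in>\<C>. card C^2) \<le> card S^2" .
  moreover have "cost_time \<C> = (\<Sum>C\<in>\<C>. card C^2) + card \<C>"
    unfolding cost_time_def sum.distrib by simp
  ultimately show ?thesis using card_cluster_family_le[OF assms] by linarith
qed

lemma combine_step_cluster_family:
  assumes "cluster_family S (A i \<union> B j)" "\<forall>m. cluster_family S (C m)"
  shows "\<forall>m. cluster_family S (fst (combine_step d A B (C, T) (i, j)) m)"
  using assms unfolding combine_step_def Let_def by simp

lemma combine_step_time:
  assumes "finite S" "cluster_family S (A i \<union> B j)" "cluster_family S (C (i + j))"
  shows "snd (combine_step d A B (C, T) (i, j)) \<le> T + (2 * card S^2 + 4 * card S + 5)"
proof -
  have "cluster_family S (A i)" "cluster_family S (B j)"
    using cluster_family_subset[OF assms(2)] by auto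
  then have "card (A i) \<le> card S + 1" "card (B j) \<le> card S + 1"
    "cost_time (A i \<union> B j) \<le> card S^2 + card S + 1" "cost_time (C (i + j)) \<le> card S^2 + card S + 1"
    using assms card_cluster_family_le cost_time_cluster_family_le by blast+
  then show ?thesis unfolding combine_step_def Let_def by simp
qed

lemma foldl_invariant_time:
  assumes "\<And>x T y. P x \<Longrightarrow> P (fst (f (x, T) y)) \<and> snd (f (x, T) y) \<le> T + K"
    and "P x\<^sub>0"
  shows "P (fst (foldl f (x\<^sub>0, T\<^sub>0) ys)) \<and> snd (foldl f (x\<^sub>0, T\<^sub>0) ys) \<le> T\<^sub>0 + length ys * K"
  using assms(2)
proof (induction ys arbitrary: x\<^sub>0 T\<^sub>0)
  case (Cons y ys)
  obtain x\<^sub>1 T\<^sub>1 where step: "f (x\<^sub>0, T\<^sub>0) y = (x\<^sub>1, T\<^sub>1)" by fastforce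
  with assms(1)[OF Cons.prems] have "P x\<^sub>1" "T\<^sub>1 \<le> T\<^sub>0 + K" by (metis fst_conv snd_conv)+
  with Cons.IH[of x\<^sub>1 T\<^sub>1] step show ?case by auto
qed simp

lemma length_filtered_pairs_le:
  "length [(i, j). i \<leftarrow> xs, j \<leftarrow> ys, P i j] \<le> length xs * length ys"
proof (induction xs)
  case (Cons x xs)
  have "length [(x, j). j \<leftarrow> ys, P x j] \<le> length ys"
    by (induction ys) auto
  with Cons show ?case by simp
qed simp

lemma combine_cluster_family_time:
  assumes "finite S" "\<And>i j. cluster_family S (A i \<union> B j)" "combine d t S A B = (C, T)"
  shows "(\<forall>m. cluster_family S (C m)) \<and> T \<le> t^2 * (2 * card S^2 + 4 * card S + 5)"
proof -
  let ?P = "\<lambda>C. \<forall>m. cluster_family S (C m)"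
  let ?K = "2 * card S^2 + 4 * card S + 5"
  let ?ijs = "[(i, j). i \<leftarrow> [1..<t], j \<leftarrow> [1..<t], i + j \<le> t]"
  have "?P (fst (combine_step d A B (C', T') ij)) \<and> snd (combine_step d A B (C', T') ij) \<le> T' + ?K"
    if "?P C'" for C' T' ij
  proof (cases ij)
    case (Pair i j)
    then show ?thesis
      using that assms(1,2) combine_step_cluster_family[of S A i B j C' d T']
        combine_step_time[of S A i B j C' d T'] by simp
  qed
  then have "?P C \<and> T \<le> 0 + length ?ijs * ?K"
    using foldl_invariant_time[of ?P "combine_step d A B" ?K "\<lambda>_. {S}" 0 ?ijs] assms(3)
    unfolding combine_def by (simp add: cluster_family_singleton)
  moreover have "length ?ijs * ?K \<le> t^2 * ?K"
    using length_filtered_pairs_le[where xs = "[1..<t]" and ys = "[1..<t]" and P = "\<lambda>i j. i + j \<le> t"]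
    by (intro mult_le_mono1) (simp add: power2_eq_square le_trans[OF _ mult_le_mono])
  ultimately show ?thesis by (auto intro: order_trans)
qed

lemma msd_time_recurrence:
  fixes t s s1 s2 TA TB TL :: nat
  assumes "2 \<le> t" "2 \<le> s" "s1 + s2 = s"
    "TA \<le> 12 * (t - 1)^3 * s1^2 + 2 * (t - 1) + 1"
    "TB \<le> 12 * (t - 1)^3 * s2^2 + 2 * (t - 1) + 1"
    "TL \<le> t^2 * (2 * s^2 + 4 * s + 5)"
  shows "t + 1 + s^2 + 1 + s + TA + TB + TL \<le> 12 * t^3 * s^2 + 2 * t + 1"
proof -
  obtain u where t: "t = Suc u" using assms(1) by (cases t) auto
  have s: "2 * s \<le> s^2" "4 \<le> s^2"
    using mult_le_mono1[OF assms(2), of s] mult_le_mono[OF assms(2) assms(2)]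
    by (simp_all add: power2_eq_square)
  have "s1^2 + s2^2 \<le> s^2" unfolding assms(3)[symmetric] power2_sum by simp
  then have "TA + TB \<le> 12 * (u^3 * s^2) + 4 * u + 2"
    using assms(4,5) t add_mult_distrib2[of "12 * u^3" "s1^2" "s2^2"]
      mult_le_mono2[of "s1^2 + s2^2" "s^2" "12 * u^3"] by simp
  moreover have "2 * s^2 + 4 * s + 5 \<le> 6 * s^2" using s by linarith
  then have "t^2 * (2 * s^2 + 4 * s + 5) \<le> t^2 * (6 * s^2)" by (rule mult_le_mono2)
  then have "TL \<le> 6 * (u^2 * s^2) + 12 * (u * s^2) + 6 * s^2"
    using assms(6) by (simp add: t power2_eq_square algebra_simps)
  moreover have "12 * t^3 * s^2 = 12 * (u^3 * s^2) + 36 * (u^2 * s^2) + 36 * (u * s^2) + 12 * s^2"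
    by (simp add: t power2_eq_square power3_eq_cube algebra_simps)
  moreover have "u \<le> u * s^2" using s by simp
  ultimately show ?thesis using s t by linarith
qed

lemma msd_run_cluster_family_time:
  assumes "msd_run X d S t C T" "finite S"
  shows "(\<forall>m. cluster_family S (C m)) \<and> T \<le> 12 * t^3 * card S^2 + 2 * t + 1"
  using assms
proof (induction rule: msd_run.induct)
  case (base t S)
  then show ?case by (simp add: cluster_family_singleton)
next
  case (step t S x y R A TA B TB C TL)
  let ?S\<^sub>1 = "S \<inter> Ball_d X d x R" and ?S\<^sub>2 = "S - Ball_d X d x R"
  have split: "?S\<^sub>1 \<union> ?S\<^sub>2 = S" "?S\<^sub>1 \<inter> ?S\<^sub>2 = {}" by blast+
  have fin: "finite ?S\<^sub>1" "finite ?S\<^sub>2" using step.prems by auto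
  note IH\<^sub>1 = step.IH(1)[OF fin(1)] and IH\<^sub>2 = step.IH(2)[OF fin(2)]
  have "cluster_family S (A i \<union> B j)" for i j
    using cluster_family_Un[of ?S\<^sub>1 "A i" ?S\<^sub>2 "B j"] IH\<^sub>1 IH\<^sub>2 split by simp
  then have comb: "(\<forall>m. cluster_family S (C m)) \<and> TL \<le> t^2 * (2 * card S^2 + 4 * card S + 5)"
    using combine_cluster_family_time step.prems step.hyps(10) by blast
  have "card ?S\<^sub>1 + card ?S\<^sub>2 = card S"
    using card_Un_disjoint[OF fin split(2)] split(1) by simp
  then have "t + 1 + card S^2 + 1 + card S + TA + TB + TL \<le> 12 * t^3 * card S^2 + 2 * t + 1"
    using msd_time_recurrence step.hyps(1,2) IH\<^sub>1 IH\<^sub>2 comb by simp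
  with comb show ?case by simp
qed

theorem lemma3:
  shows "\<exists>c::nat. \<forall>(X::'a set) d n k C T.
     finite X \<and> card X = n \<and> metric_on X d \<and> 1 \<le> k \<and> k \<le> n \<and> msd_run X d X k C T
       \<longrightarrow> T \<le> c * n ^ c"
proof (intro exI[of _ 15] allI impI)
  fix X :: "'a set" and d n k C T
  assume "finite X \<and> card X = n \<and> metric_on X d \<and> 1 \<le> k \<and> k \<le> n \<and> msd_run X d X k C T"
  then have T: "T \<le> 12 * k^3 * n^2 + 2 * k + 1" and k: "1 \<le> k" "k \<le> n"
    using msd_run_cluster_family_time[of X d X k C T] by auto
  have "k^3 * n^2 \<le> n^3 * n^2" using power_mono[OF k(2), of 3] by (intro mult_le_mono1) simp
  also have "\<dots> = n^5" by (simp flip: power_add)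
  finally have "12 * k^3 * n^2 \<le> 12 * n^5" by simp
  moreover have "n \<le> n^5" "n^5 \<le> n^15"
    using k by (simp_all add: self_le_power power_increasing)
  ultimately show "T \<le> 15 * n ^ 15" using T k by linarith
qed

end
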